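(* Let $d_3(n)=\sum_{abc=n}1$ be the three-divisor function (so $\sum_{n\ge1}d_3(n)n^{-s}=\zeta(s)^3$), and for real $x$ and positive integer $H$ let $M_3(x,H)=H\,\mathrm{Res}_{s=1}\big(\zeta(s)^3x^{s-1}\big)$. For positive integers $N,H$ define $$J_3(N,H)=\sum_{N<x\le 2N}\Big|\sum_{x<n\le x+H}d_3(n)-M_3(x,H)\Big|^2,\qquad \widetilde{J}_3(N,H)=\sum_{N<x\le 2N}\Big|\sum_{0\le |n-x|\le H}\Big(1-\frac{|n-x|}{H}\Big)d_3(n)-M_3(x,H)\Big|^2,$$ where $x$ and $n$ run over positive integers. Fix a constant $c>0$. Assume the following (Conjecture CL): for every $\varepsilon>0$ there is $C_\varepsilon>0$ such that $\widetilde{J}_3(N,H)\le C_\varepsilon N^{\varepsilon}NH$ for all positive integers $N,H$ with $H\le cN^{1/3}$. Then for every $\varepsilon>0$ there is $C'_\varepsilon>0$ such that $J_3(N,H)\le C'_\varepsilon N^{\varepsilon}NH^{6/5}$ for all positive integers $N,H$ with $H\le cN^{1/3}$.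
   Context: The notation $A\ll B$ means $|A|\le C B$ for some constant $C$; the estimates are understood as $N\to\infty$. *)

theory Defs
  imports "HOL-Complex_Analysis.Complex_Analysis"
begin

definition d3 :: "nat \<Rightarrow> nat" where
  "d3 n = card ({(a, b, c). a * b * c = n} :: (nat \<times> nat \<times> nat) set)"

definition eta :: "complex \<Rightarrow> complex" where
  "eta s = (\<Sum>n. (-1) ^ n / (of_nat (Suc n)) powr s)"

text \<open>Riemann zeta function on the half plane Re s > 0 (analytic continuation
  via zeta(s) = eta(s) / (1 - 2^(1-s))); for Re s > 1 it equals the sum of n^(-s).\<close>
definition zeta :: "complex \<Rightarrow> complex" where
  "zeta s = eta s / (1 - 2 powr (1 - s))"

definition M3 :: "real \<Rightarrow> nat \<Rightarrow> complex" where
  "M3 x H = of_nat H * residue (\<lambda>s. zeta s ^ 3 * (of_real x) powr (s - 1)) 1"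

definition J3 :: "nat \<Rightarrow> nat \<Rightarrow> real" where
  "J3 N H = (\<Sum>x\<in>{N<..2*N}.
     (cmod ((\<Sum>n\<in>{x<..x+H}. of_nat (d3 n)) - M3 (real x) H))\<^sup>2)"

definition J3tilde :: "nat \<Rightarrow> nat \<Rightarrow> real" where
  "J3tilde N H = (\<Sum>x\<in>{N<..2*N}.
     (cmod ((\<Sum>n\<in>{n::nat. 0 < n \<and> \<bar>int n - int x\<bar> \<le> int H}.
        of_real (1 - \<bar>real n - real x\<bar> / real H) * of_nat (d3 n)) - M3 (real x) H))\<^sup>2)"

end

theory Submission
  imports Defs "HOL-Probability.Characteristic_Functions"
begin

text \<open>Averaging the sharp sums over the \<open>m\<close> windows of length \<open>m\<close> containing a point gives a
  Fejer sum of length \<open>m\<close>. Hence a window of length \<open>H\<close> splits into about \<open>H/m\<close> Fejer windows,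
  averages of windows shorter than \<open>m\<close>, and the drift of the main term across the window.
  By Cauchy-Schwarz over \<open>N < x \<le> 2N\<close>, \<open>J\<^sub>3(N,H)\<close> is bounded by \<open>(H/m)\<^sup>2\<close> times the Fejer
  variance, which Conjecture CL bounds by \<open>N\<^sup>1\<^sup>+\<^sup>\<epsilon> m\<close>, plus the variances of windows shorter
  than \<open>m\<close>, plus \<open>O(H\<^sup>4)\<close> from the drift: the main term is \<open>H\<close> times a quadratic polynomial
  in \<open>log x\<close> (the residue of \<open>\<zeta>\<^sup>3\<close> at its triple pole), whose value moves by \<open>O(H/\<surd>N)\<close> across a window,
  and \<open>H\<^sup>4 \<le> c\<^sup>3 N H\<close>. So if \<open>J\<^sub>3 \<lless> N\<^sup>1\<^sup>+\<^sup>\<epsilon> H\<^sup>a\<close>, choosing \<open>m \<approx> H\<^sup>b\<close> gives the exponent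
  \<open>max(2 - b, a b)\<close>. The case \<open>m = 1\<close> gives \<open>a = 2\<close>, then \<open>b = 2/3\<close> gives \<open>4/3\<close> and
  \<open>b = 4/5\<close> gives \<open>6/5\<close>.\<close>

section \<open>The eta function near 1\<close>

lemma sums_of_paired_sums:
  fixes f :: "nat \<Rightarrow> 'a::real_normed_vector"
  assumes pairs: "(\<lambda>k. f (2 * k) + f (2 * k + 1)) sums l" and f0: "f \<longlonglongrightarrow> 0"
  shows "f sums l"
proof -
  have even: "(\<Sum>i<2 * K. f i) = (\<Sum>k<K. f (2 * k) + f (2 * k + 1))" for K
    by (induction K) simp_all
  have "(\<lambda>K. \<Sum>i<2 * K. f i) \<longlonglongrightarrow> l"
    using pairs unfolding sums_def even .
  moreover have "(\<lambda>K. f (2 * K)) \<longlonglongrightarrow> 0"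
    using LIMSEQ_subseq_LIMSEQ[OF f0, of "\<lambda>K. 2 * K"] by (simp add: strict_mono_def o_def)
  ultimately have "(\<lambda>K. (\<Sum>i<2 * K. f i) + f (2 * K)) \<longlonglongrightarrow> l + 0"
    by (rule tendsto_add)
  then have "(\<lambda>K. \<Sum>i<2 * K + 1. f i) \<longlonglongrightarrow> l"
    by simp
  with \<open>(\<lambda>K. \<Sum>i<2 * K. f i) \<longlonglongrightarrow> l\<close> show ?thesis
    unfolding sums_def by (rule limseq_even_odd)
qed

lemma norm_exp_diff_le:
  fixes s :: complex and u v :: real
  assumes "u \<le> v" and small: "cmod s * (v - u) \<le> 1/2"
  shows "cmod (exp (- s * u) - exp (- s * v)) \<le> 3/2 * cmod s * (v - u) * exp (- Re s * u)"
proof -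
  define w where "w = - s * of_real (v - u)"
  have nw: "cmod w = cmod s * (v - u)"
    unfolding w_def norm_mult norm_minus_cancel norm_of_real using \<open>u \<le> v\<close> by simp
  have "exp (- s * u) - exp (- s * v) = - exp (- s * u) * (exp w - 1)"
    by (simp add: w_def algebra_simps flip: exp_add)
  then have "cmod (exp (- s * u) - exp (- s * v)) = exp (- Re s * u) * cmod (exp w - 1)"
    by (simp add: norm_mult norm_exp_eq_Re)
  also have "\<dots> \<le> exp (- Re s * u) * (3/2 * cmod w)"
    using norm_exp_bounds(2)[of w] small nw by (intro mult_left_mono) auto
  finally show ?thesis
    by (simp add: nw mult_ac)
qed

definition eta_term :: "complex \<Rightarrow> nat \<Rightarrow> complex" where
  "eta_term s n = (-1) ^ n / of_nat (Suc n) powr s"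

lemma eta_eq_suminf: "eta s = suminf (eta_term s)"
  unfolding eta_def eta_term_def ..

lemma of_nat_powr_eq_exp:
  "0 < n \<Longrightarrow> (of_nat n :: complex) powr s = exp (s * of_real (ln (real n)))"
  unfolding powr_def by (simp add: Ln_of_nat)

lemma eta_term_pair:
  "eta_term s (2 * k) + eta_term s (2 * k + 1)
     = exp (- s * of_real (ln (2 * k + 1))) - exp (- s * of_real (ln (2 * k + 2)))"
  using of_nat_powr_eq_exp[of "2 * k + 1" s] of_nat_powr_eq_exp[of "2 * k + 2" s]
  by (simp add: eta_term_def exp_minus divide_inverse add_ac)

lemma norm_eta_term_pair_le:
  assumes s: "s \<in> ball 1 (1/2)" and k: "1 \<le> k"
  shows "cmod (eta_term s (2 * k) + eta_term s (2 * k + 1)) \<le> 9/4 * real k powr (-3/2)"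
proof -
  define u where "u = ln (2 * real k + 1)"
  define v where "v = ln (2 * real k + 2)"
  have s1: "cmod (s - 1) < 1/2"
    using s by (simp add: dist_norm norm_minus_commute)
  have Re_s: "1/2 \<le> Re s"
    using abs_Re_le_cmod[of "s - 1"] s1 by simp
  have norm_s: "cmod s \<le> 3/2"
    using norm_triangle_sub[of s 1] s1 by simp
  have uv: "u \<le> v" "v - u \<le> 1 / (2 * real k + 1)"
    using ln_le_minus_one[of "(2 * real k + 2) / (2 * real k + 1)"]
    by (simp_all add: u_def v_def ln_div field_simps)
  have "cmod s * (v - u) \<le> 3/2 * (1 / (2 * real k + 1))"
    using norm_s uv by (intro mult_mono) auto
  also have "\<dots> \<le> 1/2"
    using k by (simp add: field_simps)
  finally have small: "cmod s * (v - u) \<le> 1/2" .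
  have "(1/2) * u \<le> Re s * u"
    using Re_s by (intro mult_right_mono) (simp_all add: u_def)
  then have "exp (- Re s * u) \<le> exp (- (1/2) * u)"
    by simp
  also have "\<dots> = (2 * real k + 1) powr (-1/2)"
    by (simp add: u_def powr_def)
  finally have decay: "exp (- Re s * u) \<le> (2 * real k + 1) powr (-1/2)" .
  have "cmod (eta_term s (2 * k) + eta_term s (2 * k + 1)) \<le> 3/2 * cmod s * (v - u) * exp (- Re s * u)"
    unfolding eta_term_pair using norm_exp_diff_le[OF uv(1) small]
    by (simp add: u_def v_def add_ac)
  also have "\<dots> \<le> 3/2 * (3/2) * (1 / (2 * real k + 1)) * (2 * real k + 1) powr (-1/2)"
    using norm_s uv decay by (intro mult_mono) auto
  also have "\<dots> = 9/4 * ((2 * real k + 1) powr (-1) * (2 * real k + 1) powr (-1/2))"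
    by (simp add: powr_neg_one)
  also have "\<dots> = 9/4 * (2 * real k + 1) powr (-3/2)"
    unfolding powr_add[symmetric] by simp
  also have "\<dots> \<le> 9/4 * real k powr (-3/2)"
    using k by (intro mult_left_mono powr_mono2') auto
  finally show ?thesis .
qed

lemma eta_term_eq_exp: "eta_term s n = (-1) ^ n * exp (- s * of_real (ln (real (Suc n))))"
  using of_nat_powr_eq_exp[of "Suc n" s]
  by (simp add: eta_term_def exp_minus divide_inverse del: of_nat_Suc)

lemma norm_eta_term: "cmod (eta_term s n) = real (Suc n) powr (- Re s)"
proof -
  have "cmod ((of_nat (Suc n) :: complex) powr s) = real (Suc n) powr Re s"
    using norm_powr_real_powr[of "of_nat (Suc n)" s] by simp
  then show ?thesis
    by (simp add: eta_term_def norm_mult norm_inverse norm_power powr_minus divide_inverse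
        del: of_nat_Suc)
qed

lemma eta_term_tendsto_0:
  assumes "0 < Re s"
  shows "eta_term s \<longlonglongrightarrow> 0"
proof -
  have "filterlim (\<lambda>n. real (Suc n)) at_top sequentially"
    by (rule filterlim_compose[OF filterlim_real_sequentially filterlim_Suc])
  with assms have "(\<lambda>n. real (Suc n) powr (- Re s)) \<longlonglongrightarrow> 0"
    by (intro tendsto_neg_powr) simp_all
  then show ?thesis
    unfolding norm_eta_term[symmetric] by (rule tendsto_norm_zero_cancel)
qed

lemma eta_holomorphic_near_1: "eta holomorphic_on ball 1 (1/2)"
proof -
  define S where "S = ball (1::complex) (1/2)"
  define P where "P k s = eta_term s (2 * k) + eta_term s (2 * k + 1)" for k s
  define g where "g s = (\<Sum>k. P k s)" for s
  have bound: "\<forall>\<^sub>F k in sequentially. \<forall>s\<in>S. cmod (P k s) \<le> 9/4 * real k powr (-3/2)"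
    unfolding S_def P_def using norm_eta_term_pair_le
    by (auto simp: eventually_sequentially intro!: exI[of _ 1])
  have summable: "summable (\<lambda>k. 9/4 * real k powr (-3/2))"
    by (intro summable_mult) (simp add: summable_real_powr_iff)
  have unif: "uniform_limit S (\<lambda>n s. \<Sum>k<n. P k s) g sequentially"
    unfolding g_def by (rule Weierstrass_m_test_ev[OF bound summable])
  have "g holomorphic_on S"
  proof (rule holomorphic_uniform_sequence)
    fix s assume "s \<in> S"
    then obtain d where "0 < d" "cball s d \<subseteq> S"
      unfolding S_def using open_ball open_contains_cball by blast
    then show "\<exists>d>0. cball s d \<subseteq> S \<and> uniform_limit (cball s d) (\<lambda>n s. \<Sum>k<n. P k s) g sequentially"
      using uniform_limit_on_subset[OF unif] by blast
  next
    show "(\<lambda>s. \<Sum>k<n. P k s) holomorphic_on S" for n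
      unfolding P_def eta_term_eq_exp by (intro holomorphic_intros)
  qed (simp add: S_def)
  moreover have "g s = eta s" if "s \<in> S" for s
  proof -
    have "\<forall>\<^sub>F k in sequentially. cmod (P k s) \<le> 9/4 * real k powr (-3/2)"
      by (rule eventually_mono[OF bound]) (use that in blast)
    then have "summable (\<lambda>k. P k s)"
      by (rule summable_comparison_test_ev[OF _ summable])
    then have "(\<lambda>k. P k s) sums g s"
      unfolding g_def by (rule summable_sums)
    moreover have "eta_term s \<longlonglongrightarrow> 0"
      using that abs_Re_le_cmod[of "s - 1"]
      by (intro eta_term_tendsto_0) (simp add: S_def dist_norm norm_minus_commute)
    ultimately have "eta_term s sums g s"
      unfolding P_def by (rule sums_of_paired_sums)
    then show ?thesis
      by (simp add: eta_eq_suminf sums_iff)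
  qed
  ultimately show ?thesis
    unfolding S_def by (rule holomorphic_transform)
qed

section \<open>The main term\<close>

definition zeta_pole_factor :: "complex \<Rightarrow> complex" where
  "zeta_pole_factor s = (if s = 1 then of_real (ln 2) else (1 - 2 powr (1 - s)) / (s - 1))"

lemma zeta_pole_factor_holomorphic: "zeta_pole_factor holomorphic_on UNIV"
proof -
  define q where "q s = 1 - exp ((1 - s) * of_real (ln 2))" for s :: complex
  have q_eq: "q s = 1 - 2 powr (1 - s)" for s
    using of_nat_powr_eq_exp[of 2 "1 - s"] by (simp add: q_def)
  have "(q has_field_derivative of_real (ln 2)) (at 1)"
    unfolding q_def by (auto intro!: derivative_eq_intros)
  then have "deriv q 1 = of_real (ln 2)"
    by (rule DERIV_imp_deriv)
  then have pole_form: "zeta_pole_factor = (\<lambda>s. if s = 1 then deriv q 1 else (q s - q 1) / (s - 1))"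
    by (auto simp: fun_eq_iff zeta_pole_factor_def q_eq)
  have "q holomorphic_on UNIV"
    unfolding q_def by (intro holomorphic_intros)
  then have "(\<lambda>s. if s = 1 then deriv q 1 else (q s - q 1) / (s - 1)) holomorphic_on UNIV"
    by (rule pole_lemma) simp
  then show ?thesis
    unfolding pole_form .
qed

lemma zeta_eq_pole_factor: "s \<noteq> 1 \<Longrightarrow> zeta s = eta s / ((s - 1) * zeta_pole_factor s)"
  by (simp add: zeta_def zeta_pole_factor_def)

lemma higher_deriv_exp_linear:
  "(deriv ^^ j) (\<lambda>s. exp ((s - z) * L)) = (\<lambda>s. L ^ j * exp ((s - z) * L :: complex))"
proof (induction j)
  case (Suc j)
  have "deriv (\<lambda>s. L ^ j * exp ((s - z) * L)) s = L ^ Suc j * exp ((s - z) * L)" for s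
    by (rule DERIV_imp_deriv) (auto intro!: derivative_eq_intros)
  then show ?case
    by (simp add: Suc.IH fun_eq_iff)
qed simp

lemma residue_times_exp_over_cube:
  assumes "open U" "z \<in> U" "G holomorphic_on U"
  shows "residue (\<lambda>s. G s * exp ((s - z) * L) / (s - z) ^ 3) z
           = (deriv ^^ 2) G z / 2 + deriv G z * L + G z / 2 * L\<^sup>2"
proof -
  have exp_holo: "(\<lambda>s. exp ((s - z) * L)) holomorphic_on U"
    by (intro holomorphic_intros)
  have "residue (\<lambda>s. G s * exp ((s - z) * L) / (s - z) ^ Suc 2) z
          = (deriv ^^ 2) (\<lambda>s. G s * exp ((s - z) * L)) z / fact 2"
    using assms exp_holo by (intro residue_holomorphic_over_power holomorphic_intros)
  also have "(deriv ^^ 2) (\<lambda>s. G s * exp ((s - z) * L)) z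
      = (\<Sum>i = 0..2. of_nat (2 choose i) * (deriv ^^ i) G z * (deriv ^^ (2 - i)) (\<lambda>s. exp ((s - z) * L)) z)"
    using assms exp_holo by (intro higher_deriv_mult)
  also have "\<dots> = (deriv ^^ 2) G z + 2 * deriv G z * L + G z * L\<^sup>2"
    by (simp add: higher_deriv_exp_linear numeral_2_eq_2 power2_eq_square)
  finally show ?thesis
    by (simp add: numeral_3_eq_3 field_simps)
qed

definition d3_density :: "real \<Rightarrow> complex" where
  "d3_density x = residue (\<lambda>s. zeta s ^ 3 * of_real x powr (s - 1)) 1"

lemma d3_density_quadratic_in_ln:
  obtains a0 a1 a2 :: complex
  where "\<And>x. 0 < x \<Longrightarrow> d3_density x = a0 + a1 * of_real (ln x) + a2 * of_real (ln x) ^ 2"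
proof -
  define U where "U = ball 1 (1/2) \<inter> {s. zeta_pole_factor s \<noteq> 0}"
  define G where "G s = (eta s / zeta_pole_factor s) ^ 3" for s
  have "open U"
    unfolding U_def using zeta_pole_factor_holomorphic
    by (intro open_Int open_Collect_neq holomorphic_on_imp_continuous_on) auto
  moreover have "1 \<in> U"
    by (simp add: U_def zeta_pole_factor_def)
  moreover have "G holomorphic_on U"
    unfolding G_def U_def
    by (intro holomorphic_intros holomorphic_on_subset[OF eta_holomorphic_near_1]
        holomorphic_on_subset[OF zeta_pole_factor_holomorphic]) auto
  ultimately have residue_G: "residue (\<lambda>s. G s * exp ((s - 1) * L) / (s - 1) ^ 3) 1
      = (deriv ^^ 2) G 1 / 2 + deriv G 1 * L + G 1 / 2 * L\<^sup>2" for L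
    by (rule residue_times_exp_over_cube)
  have "d3_density x = (deriv ^^ 2) G 1 / 2 + deriv G 1 * of_real (ln x) + G 1 / 2 * of_real (ln x) ^ 2"
    if "0 < x" for x
  proof -
    have "zeta s ^ 3 * of_real x powr (s - 1) = G s * exp ((s - 1) * of_real (ln x)) / (s - 1) ^ 3"
      if "s \<noteq> 1" for s
    proof -
      have "zeta s = (eta s / zeta_pole_factor s) / (s - 1)"
        using that by (simp add: zeta_eq_pole_factor divide_divide_eq_left mult.commute)
      moreover have "of_real x powr (s - 1) = exp ((s - 1) * of_real (ln x))"
        using \<open>0 < x\<close> by (simp add: powr_def Ln_of_real mult.commute)
      ultimately show ?thesis
        by (simp add: G_def power_divide power_mult_distrib)
    qed
    then have "d3_density x = residue (\<lambda>s. G s * exp ((s - 1) * of_real (ln x)) / (s - 1) ^ 3) 1"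
      unfolding d3_density_def by (intro residue_cong) (auto simp: eventually_at_filter)
    then show ?thesis
      by (simp add: residue_G)
  qed
  then show ?thesis
    using that by blast
qed

lemma norm_quadratic_in_ln_diff_le:
  fixes a0 a1 a2 :: complex and x y :: real
  assumes "1 \<le> x" "x \<le> y"
  shows "cmod ((a0 + a1 * of_real (ln y) + a2 * of_real (ln y) ^ 2)
                - (a0 + a1 * of_real (ln x) + a2 * of_real (ln x) ^ 2))
         \<le> (cmod a1 + 4 * cmod a2) * sqrt y * ((y - x) / x)"
proof -
  define d where "d = ln y - ln x"
  have "d = ln (y / x)"
    using assms by (simp add: d_def ln_div)
  then have d: "0 \<le> d" "d \<le> (y - x) / x"
    using assms ln_le_minus_one[of "y / x"] by (simp_all add: diff_divide_distrib)
  have "ln y = 2 * ln (sqrt y)"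
    using assms by (simp add: ln_sqrt)
  also have "\<dots> \<le> 2 * sqrt y"
    using assms by (simp add: ln_bound)
  moreover have "ln x \<le> ln y"
    using assms by simp
  ultimately have "ln y + ln x \<le> 4 * sqrt y"
    by linarith
  moreover have "0 \<le> ln y + ln x" "1 \<le> sqrt y"
    using assms by simp_all
  ultimately have "cmod a1 * 1 + cmod a2 * (ln y + ln x) \<le> cmod a1 * sqrt y + cmod a2 * (4 * sqrt y)"
    by (intro add_mono mult_left_mono) auto
  then have factor: "cmod a1 + cmod a2 * (ln y + ln x) \<le> (cmod a1 + 4 * cmod a2) * sqrt y"
    by (simp add: algebra_simps)
  define S where "S = ln y + ln x"
  have "(a0 + a1 * of_real (ln y) + a2 * of_real (ln y) ^ 2) - (a0 + a1 * of_real (ln x) + a2 * of_real (ln x) ^ 2)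
        = (a1 + a2 * of_real S) * of_real d"
    by (simp add: S_def d_def algebra_simps power2_eq_square)
  also have "cmod \<dots> = cmod (a1 + a2 * of_real S) * d"
    using d by (simp add: norm_mult)
  also have "\<dots> \<le> (cmod a1 + cmod a2 * S) * d"
    using d \<open>0 \<le> ln y + ln x\<close> norm_triangle_ineq[of a1 "a2 * of_real S"]
    unfolding S_def[symmetric] by (intro mult_right_mono) (simp_all add: norm_mult)
  also have "\<dots> \<le> (cmod a1 + 4 * cmod a2) * sqrt y * ((y - x) / x)"
    using assms d factor unfolding S_def by (intro mult_mono) auto
  finally show ?thesis .
qed

lemma d3_density_diff_le:
  obtains K where "0 \<le> K"
    and "\<And>x y. 1 \<le> x \<Longrightarrow> x \<le> y \<Longrightarrow> cmod (d3_density y - d3_density x) \<le> K * sqrt y * ((y - x) / x)"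
proof -
  obtain a0 a1 a2 where poly:
    "\<And>x. 0 < x \<Longrightarrow> d3_density x = a0 + a1 * of_real (ln x) + a2 * of_real (ln x) ^ 2"
    using d3_density_quadratic_in_ln by blast
  show ?thesis
  proof (rule that[of "cmod a1 + 4 * cmod a2"])
    fix x y :: real assume "1 \<le> x" "x \<le> y"
    then show "cmod (d3_density y - d3_density x) \<le> (cmod a1 + 4 * cmod a2) * sqrt y * ((y - x) / x)"
      using poly[of x] poly[of y] norm_quadratic_in_ln_diff_le[of x y a0 a1 a2] by simp
  qed simp
qed

section \<open>Sharp and Fejer window sums\<close>

definition window_sum :: "(nat \<Rightarrow> 'a::comm_monoid_add) \<Rightarrow> nat \<Rightarrow> nat \<Rightarrow> 'a" where
  "window_sum f x l = (\<Sum>n\<in>{x<..x + l}. f n)"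

definition fejer_sum :: "(nat \<Rightarrow> 'a::real_algebra_1) \<Rightarrow> nat \<Rightarrow> nat \<Rightarrow> 'a" where
  "fejer_sum f x m = (\<Sum>n\<in>{n. 0 < n \<and> \<bar>int n - int x\<bar> \<le> int m}.
     of_real (1 - \<bar>real n - real x\<bar> / real m) * f n)"

lemma window_sum_0 [simp]: "window_sum f x 0 = 0"
  by (simp add: window_sum_def)

lemma window_sum_add: "window_sum f x (u + v) = window_sum f x u + window_sum f (x + u) v"
proof -
  have "{x<..x + (u + v)} = {x<..x + u} \<union> {x + u<..x + u + v}"
    by auto
  then show ?thesis
    unfolding window_sum_def by (simp add: sum.union_disjoint add.assoc)
qed

lemma window_sum_blocks:
  "window_sum f x (q * m + r) = (\<Sum>i<q. window_sum f (x + i * m) m) + window_sum f (x + q * m) r"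
proof (induction q arbitrary: x)
  case (Suc q)
  have "window_sum f x (Suc q * m + r) = window_sum f x m + window_sum f (x + m) (q * m + r)"
    by (simp flip: window_sum_add add: add.assoc)
  also have "\<dots> = window_sum f x m + (\<Sum>i<q. window_sum f (x + Suc i * m) m) + window_sum f (x + Suc q * m) r"
    by (simp add: Suc.IH add.assoc add.left_commute)
  also have "\<dots> = (\<Sum>i<Suc q. window_sum f (x + i * m) m) + window_sum f (x + Suc q * m) r"
    by (subst sum.lessThan_Suc_shift) simp
  finally show ?case .
qed simp

lemma window_sum_shift:
  "window_sum f (x + j) l + window_sum f x j = window_sum f x l + window_sum f (x + l) j"
  using window_sum_add[of f x j l] window_sum_add[of f x l j] by (simp add: add.commute)

lemma card_windows_containing:
  assumes "y < n" "n \<le> y + 2 * m"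
  shows "real (card {j\<in>{..<m}. y + j < n \<and> n \<le> y + j + m}) = real m - \<bar>real n - real (y + m)\<bar>"
proof -
  have "{j\<in>{..<m}. y + j < n \<and> n \<le> y + j + m} = {n - (y + m) ..< min m (n - y)}"
    using assms by auto
  then have "card {j\<in>{..<m}. y + j < n \<and> n \<le> y + j + m} = min m (n - y) - (n - (y + m))"
    by simp
  then show ?thesis
    using assms by (cases "n \<le> y + m") (simp_all add: of_nat_diff)
qed

lemma sum_window_sums_eq:
  "(\<Sum>j<m. window_sum f (y + j) m)
     = (\<Sum>n\<in>{y<..y + 2 * m}. of_real (real m - \<bar>real n - real (y + m)\<bar>) * (f n :: 'a::real_algebra_1))"
proof -
  define B where "B = {y<..y + 2 * m}"
  have "(\<Sum>j<m. window_sum f (y + j) m) = (\<Sum>j<m. \<Sum>n\<in>B. if y + j < n \<and> n \<le> y + j + m then f n else 0)"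
  proof (rule sum.cong[OF refl])
    fix j assume "j \<in> {..<m}"
    then have "{n\<in>B. y + j < n \<and> n \<le> y + j + m} = {y + j<..y + j + m}"
      by (auto simp: B_def)
    then show "window_sum f (y + j) m = (\<Sum>n\<in>B. if y + j < n \<and> n \<le> y + j + m then f n else 0)"
      using sum.inter_filter[of B f "\<lambda>n. y + j < n \<and> n \<le> y + j + m"]
      by (simp add: window_sum_def B_def)
  qed
  also have "\<dots> = (\<Sum>n\<in>B. \<Sum>j<m. if y + j < n \<and> n \<le> y + j + m then f n else 0)"
    by (rule sum.swap)
  also have "\<dots> = (\<Sum>n\<in>B. of_real (real m - \<bar>real n - real (y + m)\<bar>) * f n)"
  proof (rule sum.cong[OF refl])
    fix n assume "n \<in> B"
    have "(\<Sum>j<m. if y + j < n \<and> n \<le> y + j + m then f n else 0)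
        = (\<Sum>j\<in>{j\<in>{..<m}. y + j < n \<and> n \<le> y + j + m}. f n)"
      by (rule sum.inter_filter[symmetric]) simp
    also have "\<dots> = of_real (real (card {j\<in>{..<m}. y + j < n \<and> n \<le> y + j + m})) * f n"
      by simp
    also have "real (card {j\<in>{..<m}. y + j < n \<and> n \<le> y + j + m}) = real m - \<bar>real n - real (y + m)\<bar>"
      using \<open>n \<in> B\<close> unfolding B_def by (intro card_windows_containing) auto
    finally show "(\<Sum>j<m. if y + j < n \<and> n \<le> y + j + m then f n else 0)
        = of_real (real m - \<bar>real n - real (y + m)\<bar>) * f n" .
  qed
  finally show ?thesis
    by (simp only: B_def)
qed

lemma fejer_sum_eq_weighted:
  fixes f :: "nat \<Rightarrow> 'a::real_algebra_1"
  assumes "1 \<le> m"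
  shows "of_nat m * fejer_sum f (y + m) m
     = (\<Sum>n\<in>{y<..y + 2 * m}. of_real (real m - \<bar>real n - real (y + m)\<bar>) * f n)"
proof -
  define A where "A = {n. 0 < n \<and> \<bar>int n - int (y + m)\<bar> \<le> int m}"
  have "A \<subseteq> {..y + 2 * m}"
    by (auto simp: A_def)
  then have "finite A"
    by (rule finite_subset) simp
  have "{y<..y + 2 * m} \<subseteq> A"
    by (auto simp: A_def)
  have "of_nat m * fejer_sum f (y + m) m = (\<Sum>n\<in>A. of_real (real m - \<bar>real n - real (y + m)\<bar>) * f n)"
    unfolding fejer_sum_def A_def[symmetric] sum_distrib_left
  proof (rule sum.cong[OF refl])
    fix n
    have "real m * (1 - \<bar>real n - real (y + m)\<bar> / real m) = real m - \<bar>real n - real (y + m)\<bar>"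
      using assms by (simp add: field_simps)
    then have "of_nat m * (of_real (1 - \<bar>real n - real (y + m)\<bar> / real m) :: 'a)
        = of_real (real m - \<bar>real n - real (y + m)\<bar>)"
      by (metis of_real_mult of_real_of_nat_eq)
    then show "of_nat m * (of_real (1 - \<bar>real n - real (y + m)\<bar> / real m) * f n)
        = of_real (real m - \<bar>real n - real (y + m)\<bar>) * f n"
      by (simp add: mult.assoc[symmetric])
  qed
  also have "\<dots> = (\<Sum>n\<in>{y<..y + 2 * m}. of_real (real m - \<bar>real n - real (y + m)\<bar>) * f n)"
  proof (rule sum.mono_neutral_right[OF \<open>finite A\<close> \<open>{y<..y + 2 * m} \<subseteq> A\<close>], rule ballI)
    fix n assume "n \<in> A - {y<..y + 2 * m}"
    then have "n = y"
      by (auto simp: A_def)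
    then show "of_real (real m - \<bar>real n - real (y + m)\<bar>) * f n = 0"
      by simp
  qed
  finally show ?thesis .
qed

text \<open>The Fejer kernel is the autocorrelation of the indicator of a window.\<close>

lemma fejer_sum_eq_average:
  fixes f :: "nat \<Rightarrow> 'a::real_algebra_1"
  assumes "1 \<le> m"
  shows "of_nat m * fejer_sum f (y + m) m = (\<Sum>j<m. window_sum f (y + j) m)"
  by (simp only: fejer_sum_eq_weighted[OF assms] sum_window_sums_eq)

lemma window_sum_decomp:
  fixes f :: "nat \<Rightarrow> 'a::real_algebra_1"
  assumes "1 \<le> m"
  shows "of_nat m * window_sum f x H
     = (\<Sum>i<H div m. of_nat m * fejer_sum f (x + i * m + m) m)
       + (\<Sum>j<m. window_sum f (x + H div m * m + j) (H mod m) + window_sum f x j - window_sum f (x + H) j)"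
proof -
  define q where "q = H div m"
  define r where "r = H mod m"
  have "of_nat m * window_sum f x H = (\<Sum>j<m. window_sum f (x + j) H + window_sum f x j - window_sum f (x + H) j)"
    by (simp add: window_sum_shift)
  also have "\<dots> = (\<Sum>j<m. (\<Sum>i<q. window_sum f (x + i * m + j) m)
                      + (window_sum f (x + q * m + j) r + window_sum f x j - window_sum f (x + H) j))"
  proof (rule sum.cong[OF refl])
    fix j
    have "window_sum f (x + j) H = (\<Sum>i<q. window_sum f (x + j + i * m) m) + window_sum f (x + j + q * m) r"
      using window_sum_blocks[of f "x + j" q m r] by (simp add: q_def r_def)
    then show "window_sum f (x + j) H + window_sum f x j - window_sum f (x + H) j
        = (\<Sum>i<q. window_sum f (x + i * m + j) m)
          + (window_sum f (x + q * m + j) r + window_sum f x j - window_sum f (x + H) j)"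
      by (simp add: add_ac)
  qed
  also have "\<dots> = (\<Sum>i<q. \<Sum>j<m. window_sum f (x + i * m + j) m)
      + (\<Sum>j<m. window_sum f (x + q * m + j) r + window_sum f x j - window_sum f (x + H) j)"
    by (simp add: sum.distrib sum.swap[of _ "{..<m}"])
  also have "(\<Sum>i<q. \<Sum>j<m. window_sum f (x + i * m + j) m) = (\<Sum>i<q. of_nat m * fejer_sum f (x + i * m + m) m)"
  proof (rule sum.cong[OF refl])
    fix i
    show "(\<Sum>j<m. window_sum f (x + i * m + j) m) = of_nat m * fejer_sum f (x + i * m + m) m"
      using fejer_sum_eq_average[OF assms, of f "x + i * m"] by simp
  qed
  finally show ?thesis
    by (simp add: q_def r_def)
qed

section \<open>Variance of short sums\<close>

definition window_err :: "(nat \<Rightarrow> complex) \<Rightarrow> (nat \<Rightarrow> complex) \<Rightarrow> nat \<Rightarrow> nat \<Rightarrow> complex" where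
  "window_err f r x l = window_sum f x l - of_nat l * r x"

definition fejer_err :: "(nat \<Rightarrow> complex) \<Rightarrow> (nat \<Rightarrow> complex) \<Rightarrow> nat \<Rightarrow> nat \<Rightarrow> complex" where
  "fejer_err f r x m = fejer_sum f x m - of_nat m * r x"

text \<open>The main-term part of \<open>window_err\<close> after splitting: each piece carries the
  main term at its own left end rather than at \<open>x\<close>.\<close>

definition mean_drift :: "(nat \<Rightarrow> complex) \<Rightarrow> nat \<Rightarrow> nat \<Rightarrow> nat \<Rightarrow> complex" where
  "mean_drift r x H m =
     (\<Sum>i<H div m. of_nat m * (r (x + i * m + m) - r x))
     + (\<Sum>j<m. of_nat (H mod m) * (r (x + H div m * m + j) - r x)) / of_nat m
     - (\<Sum>j<m. of_nat j * (r (x + H) - r x)) / of_nat m"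

lemma window_err_decomp:
  assumes "1 \<le> m"
  shows "window_err f r x H = (\<Sum>i<H div m. fejer_err f r (x + i * m + m) m)
     + (\<Sum>j<m. window_err f r (x + H div m * m + j) (H mod m)) / of_nat m
     + (\<Sum>j<m. window_err f r x j) / of_nat m
     - (\<Sum>j<m. window_err f r (x + H) j) / of_nat m
     + mean_drift r x H m"
proof -
  define q where "q = H div m"
  define k where "k = H mod m"
  have H: "of_nat H = (of_nat q * of_nat m + of_nat k :: complex)"
    unfolding q_def k_def by (simp flip: of_nat_mult of_nat_add)
  have m: "(of_nat m :: complex) \<noteq> 0"
    using assms by simp
  have "window_sum f x H = (\<Sum>i<q. fejer_sum f (x + i * m + m) m)
     + (\<Sum>j<m. window_sum f (x + q * m + j) k + window_sum f x j - window_sum f (x + H) j) / of_nat m"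
    using window_sum_decomp[OF assms, of f x H] m
    by (simp add: q_def k_def field_simps sum_distrib_left)
  then show ?thesis
    using m
    by (simp add: window_err_def fejer_err_def mean_drift_def H q_def[symmetric] k_def[symmetric]
        sum_subtractf sum.distrib sum_distrib_left sum_distrib_right diff_divide_distrib
        add_divide_distrib algebra_simps)
qed

lemma norm_sum_of_nat_mult_le:
  fixes d :: "'i \<Rightarrow> 'a::real_normed_div_algebra"
  assumes "\<And>i. i \<in> I \<Longrightarrow> w i \<le> W" "\<And>i. i \<in> I \<Longrightarrow> norm (d i) \<le> \<delta>"
  shows "norm (\<Sum>i\<in>I. of_nat (w i) * d i) \<le> real (card I) * (real W * \<delta>)"
proof (rule order_trans[OF norm_sum sum_bounded_above])
  fix i assume "i \<in> I"
  then have "real (w i) * norm (d i) \<le> real W * \<delta>"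
    using assms[of i] by (intro mult_mono) (auto intro: order_trans[OF norm_ge_zero])
  then show "norm (of_nat (w i) * d i) \<le> real W * \<delta>"
    by (simp add: norm_mult)
qed

lemma norm_mean_drift_le:
  assumes m: "1 \<le> m" "m \<le> H"
    and regular: "\<And>y. x \<le> y \<Longrightarrow> y \<le> x + 2 * H \<Longrightarrow> cmod (r y - r x) \<le> \<delta>"
  shows "cmod (mean_drift r x H m) \<le> 3 * real H * \<delta>"
proof -
  define q where "q = H div m"
  define k where "k = H mod m"
  have qm: "q * m \<le> H" "k \<le> H"
    by (simp_all add: q_def k_def)
  have "0 \<le> \<delta>"
    using regular[of x] by (meson le_add1 norm_ge_zero order_refl order_trans)
  have "i * m + m \<le> 2 * H" if "i < q" for i
  proof -
    have "i * m + m \<le> q * m"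
      using that by (metis Suc_leI mult_Suc mult_le_mono1 add.commute)
    then show ?thesis
      using qm by linarith
  qed
  then have "cmod (\<Sum>i<q. of_nat m * (r (x + i * m + m) - r x)) \<le> real q * (real m * \<delta>)"
    using qm by (intro norm_sum_of_nat_mult_le[where I = "{..<q}", simplified] regular) auto
  also have "\<dots> \<le> real H * \<delta>"
    using qm \<open>0 \<le> \<delta>\<close> by (simp add: mult.assoc[symmetric] mult_right_mono flip: of_nat_mult)
  finally have blocks: "cmod (\<Sum>i<q. of_nat m * (r (x + i * m + m) - r x)) \<le> real H * \<delta>" .
  have "cmod (\<Sum>j<m. of_nat k * (r (x + q * m + j) - r x)) \<le> real m * (real k * \<delta>)"
    using qm m by (intro norm_sum_of_nat_mult_le[where I = "{..<m}", simplified] regular) auto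
  also have "\<dots> \<le> real m * (real H * \<delta>)"
    using qm \<open>0 \<le> \<delta>\<close> by (intro mult_left_mono mult_right_mono) auto
  finally have tail: "cmod ((\<Sum>j<m. of_nat k * (r (x + q * m + j) - r x)) / of_nat m) \<le> real H * \<delta>"
    using m by (simp add: norm_divide field_simps)
  have "cmod (\<Sum>j<m. of_nat j * (r (x + H) - r x)) \<le> real m * (real m * \<delta>)"
    by (intro norm_sum_of_nat_mult_le[where I = "{..<m}", simplified] regular) auto
  also have "\<dots> \<le> real m * (real H * \<delta>)"
    using m \<open>0 \<le> \<delta>\<close> by (intro mult_left_mono mult_right_mono) auto
  finally have ends: "cmod ((\<Sum>j<m. of_nat j * (r (x + H) - r x)) / of_nat m) \<le> real H * \<delta>"
    using m by (simp add: norm_divide field_simps)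
  have "cmod (mean_drift r x H m)
      \<le> cmod (\<Sum>i<q. of_nat m * (r (x + i * m + m) - r x))
       + cmod ((\<Sum>j<m. of_nat k * (r (x + q * m + j) - r x)) / of_nat m)
       + cmod ((\<Sum>j<m. of_nat j * (r (x + H) - r x)) / of_nat m)"
    unfolding mean_drift_def q_def[symmetric] k_def[symmetric]
    by (rule order_trans[OF norm_triangle_ineq4]) (intro add_right_mono norm_triangle_ineq)
  then show ?thesis
    using blocks tail ends by simp
qed

lemma norm_sum_squared_le:
  fixes f :: "'i \<Rightarrow> 'a::real_normed_vector"
  shows "(norm (\<Sum>i\<in>I. f i))\<^sup>2 \<le> real (card I) * (\<Sum>i\<in>I. (norm (f i))\<^sup>2)"
proof -
  have "(norm (\<Sum>i\<in>I. f i))\<^sup>2 \<le> (\<Sum>i\<in>I. norm (f i))\<^sup>2"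
    by (intro power_mono norm_sum) simp
  also have "\<dots> \<le> real (card I) * (\<Sum>i\<in>I. (norm (f i))\<^sup>2)"
    using sum_squared_le_sum_of_squares[of "\<lambda>i. norm (f i)" I] by (simp add: mult.commute)
  finally show ?thesis .
qed

lemma norm_average_squared_le:
  fixes f :: "nat \<Rightarrow> 'a::real_normed_field"
  assumes "1 \<le> m"
  shows "(norm ((\<Sum>j<m. f j) / of_nat m))\<^sup>2 \<le> (\<Sum>j<m. (norm (f j))\<^sup>2) / real m"
proof -
  have "(norm ((\<Sum>j<m. f j) / of_nat m))\<^sup>2 = (norm (\<Sum>j<m. f j))\<^sup>2 / (real m)\<^sup>2"
    by (simp add: norm_divide power_divide)
  also have "\<dots> \<le> (real m * (\<Sum>j<m. (norm (f j))\<^sup>2)) / (real m)\<^sup>2"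
    using norm_sum_squared_le[of f "{..<m}"] by (intro divide_right_mono) auto
  also have "\<dots> = (\<Sum>j<m. (norm (f j))\<^sup>2) / real m"
    using assms by (simp add: power2_eq_square)
  finally show ?thesis .
qed

lemma sum5_squared_le:
  fixes a b c d e :: real
  shows "(a + b + c + d + e)\<^sup>2 \<le> 5 * (a\<^sup>2 + b\<^sup>2 + c\<^sup>2 + d\<^sup>2 + e\<^sup>2)"
proof -
  have "0 \<le> (a-b)\<^sup>2 + (a-c)\<^sup>2 + (a-d)\<^sup>2 + (a-e)\<^sup>2 + (b-c)\<^sup>2 + (b-d)\<^sup>2 + (b-e)\<^sup>2
            + (c-d)\<^sup>2 + (c-e)\<^sup>2 + (d-e)\<^sup>2"
    by simp
  then show ?thesis
    by (simp add: power2_eq_square algebra_simps)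
qed

lemma norm_window_err_squared_le:
  assumes "1 \<le> m"
  shows "(cmod (window_err f r x H))\<^sup>2 \<le> 5 *
     (real (H div m) * (\<Sum>i<H div m. (cmod (fejer_err f r (x + i * m + m) m))\<^sup>2)
      + (\<Sum>j<m. (cmod (window_err f r (x + H div m * m + j) (H mod m)))\<^sup>2) / real m
      + (\<Sum>j<m. (cmod (window_err f r x j))\<^sup>2) / real m
      + (\<Sum>j<m. (cmod (window_err f r (x + H) j))\<^sup>2) / real m
      + (cmod (mean_drift r x H m))\<^sup>2)"
proof -
  define A where "A = (\<Sum>i<H div m. fejer_err f r (x + i * m + m) m)"
  define B1 where "B1 = (\<Sum>j<m. window_err f r (x + H div m * m + j) (H mod m)) / of_nat m"
  define B2 where "B2 = (\<Sum>j<m. window_err f r x j) / of_nat m"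
  define B3 where "B3 = (\<Sum>j<m. window_err f r (x + H) j) / of_nat m"
  define D where "D = mean_drift r x H m"
  have "cmod (window_err f r x H) \<le> cmod A + cmod B1 + cmod B2 + cmod B3 + cmod D"
    unfolding window_err_decomp[OF assms, of f r x H] A_def[symmetric] B1_def[symmetric]
      B2_def[symmetric] B3_def[symmetric] D_def[symmetric]
    by (intro order_trans[OF norm_triangle_ineq] add_right_mono
        order_trans[OF norm_triangle_ineq4] norm_triangle_ineq) auto
  then have "(cmod (window_err f r x H))\<^sup>2 \<le> (cmod A + cmod B1 + cmod B2 + cmod B3 + cmod D)\<^sup>2"
    by (intro power_mono) auto
  also have "\<dots> \<le> 5 * ((cmod A)\<^sup>2 + (cmod B1)\<^sup>2 + (cmod B2)\<^sup>2 + (cmod B3)\<^sup>2 + (cmod D)\<^sup>2)"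
    by (rule sum5_squared_le)
  also have "\<dots> \<le> 5 *
     (real (H div m) * (\<Sum>i<H div m. (cmod (fejer_err f r (x + i * m + m) m))\<^sup>2)
      + (\<Sum>j<m. (cmod (window_err f r (x + H div m * m + j) (H mod m)))\<^sup>2) / real m
      + (\<Sum>j<m. (cmod (window_err f r x j))\<^sup>2) / real m
      + (\<Sum>j<m. (cmod (window_err f r (x + H) j))\<^sup>2) / real m
      + (cmod D)\<^sup>2)"
    using norm_sum_squared_le[of _ "{..<H div m}"]
      norm_average_squared_le[OF assms, of "\<lambda>j. window_err f r (x + H div m * m + j) (H mod m)"]
      norm_average_squared_le[OF assms, of "\<lambda>j. window_err f r x j"]
      norm_average_squared_le[OF assms, of "\<lambda>j. window_err f r (x + H) j"]
    unfolding A_def B1_def B2_def B3_def by (intro mult_left_mono add_mono) auto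
  finally show ?thesis
    by (simp only: D_def)
qed

definition window_var :: "(nat \<Rightarrow> complex) \<Rightarrow> (nat \<Rightarrow> complex) \<Rightarrow> nat \<Rightarrow> nat \<Rightarrow> real" where
  "window_var f r N l = (\<Sum>x\<in>{N<..2 * N}. (cmod (window_err f r x l))\<^sup>2)"

definition fejer_var :: "(nat \<Rightarrow> complex) \<Rightarrow> (nat \<Rightarrow> complex) \<Rightarrow> nat \<Rightarrow> nat \<Rightarrow> real" where
  "fejer_var f r N m = (\<Sum>x\<in>{N<..2 * N}. (cmod (fejer_err f r x m))\<^sup>2)"

lemma window_var_nonneg: "0 \<le> window_var f r N l"
  by (simp add: window_var_def sum_nonneg)

lemma window_var_0 [simp]: "window_var f r N 0 = 0"
  by (simp add: window_var_def window_err_def)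

lemma sum_dyadic_shift_le:
  fixes g :: "nat \<Rightarrow> real"
  assumes "\<And>y. 0 \<le> g y" and "s \<le> 2 * N"
  shows "(\<Sum>x\<in>{N<..2 * N}. g (x + s)) \<le> (\<Sum>x\<in>{N<..2 * N}. g x) + (\<Sum>x\<in>{2 * N<..2 * (2 * N)}. g x)"
proof -
  have "(\<Sum>x\<in>{N<..2 * N}. g (x + s)) = (\<Sum>y\<in>(\<lambda>x. x + s) ` {N<..2 * N}. g y)"
    by (simp add: sum.reindex)
  also have "\<dots> \<le> (\<Sum>y\<in>{N<..2 * N} \<union> {2 * N<..2 * (2 * N)}. g y)"
    using assms by (intro sum_mono2) auto
  also have "\<dots> = (\<Sum>x\<in>{N<..2 * N}. g x) + (\<Sum>x\<in>{2 * N<..2 * (2 * N)}. g x)"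
    by (rule sum.union_disjoint) auto
  finally show ?thesis .
qed

lemma window_var_shift_le:
  "s \<le> 2 * N \<Longrightarrow> (\<Sum>x\<in>{N<..2 * N}. (cmod (window_err f r (x + s) l))\<^sup>2) \<le> window_var f r N l + window_var f r (2 * N) l"
  unfolding window_var_def by (rule sum_dyadic_shift_le) auto

lemma fejer_var_shift_le:
  "s \<le> 2 * N \<Longrightarrow> (\<Sum>x\<in>{N<..2 * N}. (cmod (fejer_err f r (x + s) m))\<^sup>2) \<le> fejer_var f r N m + fejer_var f r (2 * N) m"
  unfolding fejer_var_def by (rule sum_dyadic_shift_le) auto

lemma window_var_le_shifted_sums:
  assumes "1 \<le> m" and drift: "\<And>x. N < x \<Longrightarrow> x \<le> 2 * N \<Longrightarrow> cmod (mean_drift r x H m) \<le> D"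
  shows "window_var f r N H \<le> 5 *
     (real (H div m) * (\<Sum>i<H div m. \<Sum>x\<in>{N<..2 * N}. (cmod (fejer_err f r (x + (i * m + m)) m))\<^sup>2)
      + (\<Sum>j<m. \<Sum>x\<in>{N<..2 * N}. (cmod (window_err f r (x + (H div m * m + j)) (H mod m)))\<^sup>2) / real m
      + (\<Sum>j<m. window_var f r N j) / real m
      + (\<Sum>j<m. \<Sum>x\<in>{N<..2 * N}. (cmod (window_err f r (x + H) j))\<^sup>2) / real m
      + real N * D\<^sup>2)"
proof -
  have "window_var f r N H \<le> (\<Sum>x\<in>{N<..2 * N}. 5 *
     (real (H div m) * (\<Sum>i<H div m. (cmod (fejer_err f r (x + i * m + m) m))\<^sup>2)
      + (\<Sum>j<m. (cmod (window_err f r (x + H div m * m + j) (H mod m)))\<^sup>2) / real m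
      + (\<Sum>j<m. (cmod (window_err f r x j))\<^sup>2) / real m
      + (\<Sum>j<m. (cmod (window_err f r (x + H) j))\<^sup>2) / real m
      + D\<^sup>2))"
    unfolding window_var_def
  proof (rule sum_mono)
    fix x assume "x \<in> {N<..2 * N}"
    then have "(cmod (mean_drift r x H m))\<^sup>2 \<le> D\<^sup>2"
      using drift by (intro power_mono) auto
    show "(cmod (window_err f r x H))\<^sup>2 \<le> 5 *
     (real (H div m) * (\<Sum>i<H div m. (cmod (fejer_err f r (x + i * m + m) m))\<^sup>2)
      + (\<Sum>j<m. (cmod (window_err f r (x + H div m * m + j) (H mod m)))\<^sup>2) / real m
      + (\<Sum>j<m. (cmod (window_err f r x j))\<^sup>2) / real m
      + (\<Sum>j<m. (cmod (window_err f r (x + H) j))\<^sup>2) / real m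
      + D\<^sup>2)"
      by (rule order_trans[OF norm_window_err_squared_le[OF \<open>1 \<le> m\<close>]])
         (simp add: \<open>(cmod (mean_drift r x H m))\<^sup>2 \<le> D\<^sup>2\<close>)
  qed
  also have "\<dots> = 5 *
     (real (H div m) * (\<Sum>i<H div m. \<Sum>x\<in>{N<..2 * N}. (cmod (fejer_err f r (x + (i * m + m)) m))\<^sup>2)
      + (\<Sum>j<m. \<Sum>x\<in>{N<..2 * N}. (cmod (window_err f r (x + (H div m * m + j)) (H mod m)))\<^sup>2) / real m
      + (\<Sum>j<m. window_var f r N j) / real m
      + (\<Sum>j<m. \<Sum>x\<in>{N<..2 * N}. (cmod (window_err f r (x + H) j))\<^sup>2) / real m
      + real N * D\<^sup>2)"
    by (simp add: window_var_def sum.distrib sum_distrib_left[symmetric] sum_divide_distrib[symmetric]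
        sum.swap[of _ "{N<..2 * N}"] add.assoc)
  finally show ?thesis .
qed

lemma window_var_le:
  assumes m: "1 \<le> m" "m \<le> H" and "H \<le> N"
    and drift: "\<And>x. N < x \<Longrightarrow> x \<le> 2 * N \<Longrightarrow> cmod (mean_drift r x H m) \<le> D"
  shows "window_var f r N H \<le> 5 *
     ((real (H div m))\<^sup>2 * (fejer_var f r N m + fejer_var f r (2 * N) m)
      + (window_var f r N (H mod m) + window_var f r (2 * N) (H mod m))
      + 2 / real m * (\<Sum>j<m. window_var f r N j + window_var f r (2 * N) j)
      + real N * D\<^sup>2)"
proof -
  define q where "q = H div m"
  define k where "k = H mod m"
  have "q * m \<le> H"
    by (simp add: q_def)
  define F where "F = fejer_var f r N m + fejer_var f r (2 * N) m"
  define W where "W = window_var f r N k + window_var f r (2 * N) k"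
  define S where "S = (\<Sum>j<m. window_var f r N j + window_var f r (2 * N) j)"
  have "i * m + m \<le> 2 * N" if "i < q" for i
  proof -
    have "i * m + m \<le> q * m"
      using that by (metis Suc_leI mult_Suc mult_le_mono1 add.commute)
    then show ?thesis
      using \<open>q * m \<le> H\<close> \<open>H \<le> N\<close> by linarith
  qed
  then have "(\<Sum>i<q. \<Sum>x\<in>{N<..2 * N}. (cmod (fejer_err f r (x + (i * m + m)) m))\<^sup>2) \<le> (\<Sum>i<q. F)"
    unfolding F_def by (intro sum_mono fejer_var_shift_le) auto
  then have fejer: "(\<Sum>i<q. \<Sum>x\<in>{N<..2 * N}. (cmod (fejer_err f r (x + (i * m + m)) m))\<^sup>2) \<le> real q * F"
    by simp
  have "(\<Sum>j<m. \<Sum>x\<in>{N<..2 * N}. (cmod (window_err f r (x + (q * m + j)) k))\<^sup>2) \<le> (\<Sum>j<m. W)"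
    unfolding W_def using \<open>q * m \<le> H\<close> \<open>H \<le> N\<close> m
    by (intro sum_mono window_var_shift_le) auto
  then have tail: "(\<Sum>j<m. \<Sum>x\<in>{N<..2 * N}. (cmod (window_err f r (x + (q * m + j)) k))\<^sup>2) \<le> real m * W"
    by simp
  have start: "(\<Sum>j<m. window_var f r N j) \<le> S"
    unfolding S_def by (intro sum_mono) (simp add: window_var_nonneg)
  have ends: "(\<Sum>j<m. \<Sum>x\<in>{N<..2 * N}. (cmod (window_err f r (x + H) j))\<^sup>2) \<le> S"
    unfolding S_def using \<open>H \<le> N\<close> by (intro sum_mono window_var_shift_le) auto
  have "window_var f r N H \<le> 5 *
     (real q * (real q * F) + real m * W / real m + S / real m + S / real m + real N * D\<^sup>2)"
    using fejer tail start ends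
    by (intro order_trans[OF window_var_le_shifted_sums[OF m(1) drift, folded q_def k_def]]
        mult_left_mono add_mono divide_right_mono) simp_all
  also have "\<dots> = 5 * ((real q)\<^sup>2 * F + W + 2 / real m * S + real N * D\<^sup>2)"
    using m by (simp add: power2_eq_square field_simps)
  finally show ?thesis
    by (simp add: q_def k_def F_def W_def S_def)
qed

section \<open>Bootstrapping the exponent\<close>

definition admissible_exponent :: "real \<Rightarrow> real \<Rightarrow> (nat \<Rightarrow> nat \<Rightarrow> real) \<Rightarrow> real \<Rightarrow> bool" where
  "admissible_exponent c e J g \<longleftrightarrow> (\<exists>A>0. \<exists>N0. \<forall>N l. N0 \<le> N \<longrightarrow> 0 < l \<longrightarrow>
     real l \<le> c * real N powr (1/3) \<longrightarrow> J N l \<le> A * real N powr e * real N * real l powr g)"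

lemma cube_le_of_le_cube_root:
  fixes c :: real
  assumes "0 < c" "0 < N" "real H \<le> c * real N powr (1/3)"
  shows "real H ^ 3 \<le> c ^ 3 * real N"
proof -
  have "real H ^ 3 \<le> (c * real N powr (1/3)) ^ 3"
    using assms(3) by (rule power_mono) simp
  also have "\<dots> = c ^ 3 * (real N powr (1/3)) powr 3"
    using assms by (simp add: power_mult_distrib powr_realpow)
  also have "\<dots> = c ^ 3 * real N"
    by (simp add: powr_powr)
  finally show ?thesis .
qed

lemma le_of_le_cube_root:
  fixes c :: real
  assumes "0 < c" "0 < N" "real H \<le> c * real N powr (1/3)" "c ^ 3 \<le> real N"
  shows "H \<le> N"
proof -
  have "real H ^ 3 \<le> c ^ 3 * real N"
    using assms by (intro cube_le_of_le_cube_root)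
  also have "\<dots> \<le> real N * real N"
    using assms by (intro mult_right_mono) auto
  also have "\<dots> \<le> real N * real N * real N"
    using assms mult_left_mono[of 1 "real N" "real N * real N"] by simp
  also have "\<dots> = real N ^ 3"
    by (simp add: power3_eq_cube)
  finally have "real H ^ 3 \<le> real N ^ 3" .
  then have "real H \<le> real N"
    using power_le_imp_le_base[of "real H" 2 "real N"] by simp
  then show ?thesis
    by simp
qed

lemma le_cube_root_double:
  fixes c :: real
  assumes "0 < c" "real H \<le> c * real N powr (1/3)"
  shows "real H \<le> c * real (2 * N) powr (1/3)"
proof -
  have "real N powr (1/3) \<le> real (2 * N) powr (1/3)"
    by (intro powr_mono2) auto
  with assms show ?thesis
    by (smt (verit) mult_left_mono)
qed

lemma block_length_exists:
  assumes "0 < H" "0 \<le> b" "b \<le> 1"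
  obtains m :: nat where "1 \<le> m" "m \<le> H" "real m \<le> real H powr b" "real H powr b \<le> 2 * real m"
proof
  define t where "t = real H powr b"
  have "1 \<le> t" "t \<le> real H"
    using assms powr_mono[of b 1 "real H"] by (simp_all add: t_def ge_one_powr_ge_zero)
  moreover have "1 \<le> \<lfloor>t\<rfloor>" "t < of_int \<lfloor>t\<rfloor> + 1"
    using \<open>1 \<le> t\<close> by (simp_all add: real_of_int_floor_add_one_gt)
  ultimately show "1 \<le> nat \<lfloor>t\<rfloor>" "nat \<lfloor>t\<rfloor> \<le> H" "real (nat \<lfloor>t\<rfloor>) \<le> real H powr b"
      "real H powr b \<le> 2 * real (nat \<lfloor>t\<rfloor>)"
    unfolding t_def[symmetric] by linarith+
qed

lemma bounded_on_initial_range: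
  fixes J :: "nat \<Rightarrow> nat \<Rightarrow> real"
  assumes "0 < c" "\<And>N l. 0 \<le> J N l"
  shows "\<exists>M\<ge>0. \<forall>N H. 0 < N \<longrightarrow> N < N0 \<longrightarrow> real H \<le> c * real N powr (1/3) \<longrightarrow> J N H \<le> M"
proof (intro exI[of _ "\<Sum>N<N0. \<Sum>l\<le>nat \<lceil>c * real N0\<rceil>. J N l"] conjI allI impI)
  define L where "L = nat \<lceil>c * real N0\<rceil>"
  show "0 \<le> (\<Sum>N<N0. \<Sum>l\<le>nat \<lceil>c * real N0\<rceil>. J N l)"
    using assms(2) by (intro sum_nonneg)
  fix N H assume "0 < N" "N < N0" and H: "real H \<le> c * real N powr (1/3)"
  have "real N powr (1/3) \<le> real N powr 1"
    using \<open>0 < N\<close> by (intro powr_mono) auto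
  then have "c * real N powr (1/3) \<le> c * real N0"
    using \<open>N < N0\<close> \<open>0 < c\<close> by (intro mult_left_mono) auto
  then have "H \<le> L"
    using H unfolding L_def by linarith
  then have "J N H \<le> (\<Sum>l\<le>L. J N l)"
    using assms(2) by (intro member_le_sum) auto
  also have "\<dots> \<le> (\<Sum>N<N0. \<Sum>l\<le>L. J N l)"
    using \<open>N < N0\<close> assms(2)
    by (intro member_le_sum[where f = "\<lambda>N. \<Sum>l\<le>L. J N l"] sum_nonneg) auto
  finally show "J N H \<le> (\<Sum>N<N0. \<Sum>l\<le>nat \<lceil>c * real N0\<rceil>. J N l)"
    by (simp only: L_def)
qed

lemma one_le_powr_mult_powr:
  assumes "0 < N" "0 < H" "0 \<le> e" "0 \<le> g"
  shows "1 \<le> real N powr e * real N * real H powr g"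
proof -
  have "1 \<le> real N powr e" "1 \<le> real N" "1 \<le> real H powr g"
    using assms by (auto intro!: ge_one_powr_ge_zero)
  then have "1 * 1 * 1 \<le> real N powr e * real N * real H powr g"
    by (intro mult_mono) auto
  then show ?thesis
    by simp
qed

lemma uniform_bound_of_admissible_exponent:
  fixes J :: "nat \<Rightarrow> nat \<Rightarrow> real"
  assumes "admissible_exponent c e J g" "0 < c" "0 \<le> e" "0 \<le> g" "\<And>N l. 0 \<le> J N l"
  shows "\<exists>C>0. \<forall>N H. 0 < N \<longrightarrow> 0 < H \<longrightarrow> real H \<le> c * real N powr (1/3) \<longrightarrow>
           J N H \<le> C * real N powr e * real N * real H powr g"
proof -
  obtain A N0 where "0 < A" and large: "\<And>N l. N0 \<le> N \<Longrightarrow> 0 < l \<Longrightarrow> real l \<le> c * real N powr (1/3) \<Longrightarrow>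
      J N l \<le> A * real N powr e * real N * real l powr g"
    using assms(1) unfolding admissible_exponent_def by blast
  obtain M where "0 \<le> M"
    and small: "\<forall>N H. 0 < N \<longrightarrow> N < N0 \<longrightarrow> real H \<le> c * real N powr (1/3) \<longrightarrow> J N H \<le> M"
    using bounded_on_initial_range[of c J N0, OF assms(2,5)] by blast
  have "J N H \<le> (A + M) * real N powr e * real N * real H powr g"
    if "0 < N" "0 < H" and H: "real H \<le> c * real N powr (1/3)" for N H
  proof -
    define P where "P = real N powr e * real N * real H powr g"
    have "1 \<le> P"
      unfolding P_def using that(1,2) assms(3,4) by (rule one_le_powr_mult_powr)
    have "J N H \<le> A * P + M"
    proof (cases "N0 \<le> N")
      case True
      then have "J N H \<le> A * P"
        using large[OF True \<open>0 < H\<close> H] by (simp add: P_def mult.assoc)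
      then show ?thesis
        using \<open>0 \<le> M\<close> by linarith
    next
      case False
      then have "J N H \<le> M"
        using small \<open>0 < N\<close> H by simp
      moreover have "0 \<le> A * P"
        using \<open>0 < A\<close> \<open>1 \<le> P\<close> by simp
      ultimately show ?thesis
        by linarith
    qed
    also have "\<dots> \<le> (A + M) * P"
      using \<open>1 \<le> P\<close> \<open>0 \<le> M\<close> by (simp add: distrib_right mult_le_cancel_left1)
    finally show ?thesis
      by (simp add: P_def mult.assoc)
  qed
  moreover have "0 < A + M"
    using \<open>0 < A\<close> \<open>0 \<le> M\<close> by simp
  ultimately show ?thesis
    by blast
qed

lemma powr_le_powr_of_le_powr:
  fixes x y :: real
  assumes "0 \<le> x" "x \<le> y powr b" "1 \<le> y" "0 \<le> a" "a * b \<le> g"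
  shows "x powr a \<le> y powr g"
proof -
  have "x powr a \<le> (y powr b) powr a"
    using assms by (intro powr_mono2) auto
  also have "\<dots> = y powr (a * b)"
    by (simp add: powr_powr mult.commute)
  also have "\<dots> \<le> y powr g"
    using assms by (intro powr_mono) auto
  finally show ?thesis .
qed

lemma square_div_le_powr:
  fixes y :: real
  assumes "1 \<le> y" "1 \<le> m" "y powr b \<le> 2 * m" "2 - b \<le> g"
  shows "y\<^sup>2 / m \<le> 2 * y powr g"
proof -
  have "y\<^sup>2 / m \<le> y\<^sup>2 / (y powr b / 2)"
    using assms by (intro divide_left_mono mult_pos_pos) auto
  also have "\<dots> = 2 * y powr (2 - b)"
    using assms by (simp add: powr_diff powr_realpow)
  also have "\<dots> \<le> 2 * y powr g"
    using assms by (intro mult_left_mono powr_mono) auto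
  finally show ?thesis .
qed

lemma nat_threshold_ge_cube:
  fixes c :: real
  obtains N1 :: nat where "\<And>N. N1 \<le> N \<Longrightarrow> 1 \<le> N \<and> c ^ 3 \<le> real N"
proof -
  obtain n :: nat where "c ^ 3 \<le> real n"
    using real_arch_simple by blast
  then show ?thesis
    by (intro that[of "max 1 n"]) auto
qed

locale variance_bootstrap =
  fixes f r :: "nat \<Rightarrow> complex" and c e B K :: real
  assumes c_pos: "0 < c" and e_pos: "0 < e" and B_pos: "0 < B" and K_nonneg: "0 \<le> K"
    and fejer_var_bound: "\<And>N m. 0 < N \<Longrightarrow> 0 < m \<Longrightarrow> real m \<le> c * real N powr (1/3) \<Longrightarrow>
      fejer_var f r N m \<le> B * real N powr e * real N * real m"
    and density_regular: "\<And>x y. 1 \<le> x \<Longrightarrow> x \<le> y \<Longrightarrow>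
      cmod (r y - r x) \<le> K * sqrt (real y) * ((real y - real x) / real x)"
begin

lemma density_diff_le:
  assumes "1 \<le> N" "N < x" "x \<le> 2 * N" "H \<le> N" "x \<le> y" "y \<le> x + 2 * H"
  shows "cmod (r y - r x) \<le> 4 * K * real H / sqrt (real N)"
proof -
  have "sqrt (real y) \<le> sqrt (4 * real N)"
    using assms by simp
  also have "\<dots> = 2 * sqrt (real N)"
    by (simp add: real_sqrt_mult)
  finally have "sqrt (real y) \<le> 2 * sqrt (real N)" .
  moreover have "(real y - real x) / real x \<le> 2 * real H / real N"
    using assms by (intro frac_le) auto
  ultimately have "K * sqrt (real y) * ((real y - real x) / real x) \<le> K * (2 * sqrt (real N)) * (2 * real H / real N)"
    using assms K_nonneg by (intro mult_mono mult_left_mono) auto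
  then have "cmod (r y - r x) \<le> K * (2 * sqrt (real N)) * (2 * real H / real N)"
    using density_regular[of x y] assms by linarith
  also have "\<dots> = 4 * K * real H / sqrt (real N)"
    using assms by (simp add: field_simps real_sqrt_mult_self flip: real_sqrt_mult)
  finally show ?thesis .
qed

lemma fejer_var_pair_le:
  assumes "0 < N" "0 < m" "real m \<le> c * real N powr (1/3)"
  shows "fejer_var f r N m + fejer_var f r (2 * N) m \<le> B * (1 + 2 * 2 powr e) * (real N powr e * real N) * real m"
proof -
  have "fejer_var f r (2 * N) m \<le> B * real (2 * N) powr e * real (2 * N) * real m"
    using assms c_pos le_cube_root_double by (intro fejer_var_bound) auto
  also have "\<dots> = B * (2 * 2 powr e) * (real N powr e * real N) * real m"
    by (simp add: powr_mult)
  finally show ?thesis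
    using fejer_var_bound[OF assms] by (simp add: algebra_simps)
qed

lemma fejer_term_le:
  assumes "1 \<le> N" "1 \<le> m" "real m \<le> c * real N powr (1/3)"
  shows "(real (H div m))\<^sup>2 * (fejer_var f r N m + fejer_var f r (2 * N) m)
    \<le> B * (1 + 2 * 2 powr e) * (real N powr e * real N) * ((real H)\<^sup>2 / real m)"
proof -
  have "(real (H div m))\<^sup>2 * (fejer_var f r N m + fejer_var f r (2 * N) m)
      \<le> (real H / real m)\<^sup>2 * (B * (1 + 2 * 2 powr e) * (real N powr e * real N) * real m)"
    using fejer_var_pair_le[of N m] assms
    by (intro mult_mono power_mono) (auto simp: of_nat_div_le_of_nat fejer_var_def
        intro!: add_nonneg_nonneg sum_nonneg)
  also have "\<dots> = B * (1 + 2 * 2 powr e) * (real N powr e * real N) * ((real H)\<^sup>2 / real m)"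
    using assms by (simp add: power2_eq_square field_simps)
  finally show ?thesis .
qed

lemma drift_term_le:
  assumes "1 \<le> N" "real H \<le> c * real N powr (1/3)"
  shows "real N * (3 * real H * (4 * K * real H / sqrt (real N)))\<^sup>2
    \<le> 144 * K\<^sup>2 * c ^ 3 * (real N powr e * real N) * real H"
proof -
  have "real N * (3 * real H * (4 * K * real H / sqrt (real N)))\<^sup>2 = 144 * K\<^sup>2 * real H ^ 4"
    using assms by (simp add: power_mult_distrib power_divide field_simps)
  also have "\<dots> = 144 * K\<^sup>2 * real H ^ 3 * real H"
    by (simp add: power4_eq_xxxx power3_eq_cube mult.assoc)
  also have "\<dots> \<le> 144 * K\<^sup>2 * (c ^ 3 * real N) * real H"
    using cube_le_of_le_cube_root[OF c_pos _ assms(2)] assms by (intro mult_right_mono mult_left_mono) auto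
  also have "\<dots> \<le> 144 * K\<^sup>2 * c ^ 3 * (real N powr e * real N) * real H"
  proof -
    have "real N \<le> real N powr e * real N"
      using assms e_pos by (simp add: ge_one_powr_ge_zero)
    then have "144 * K\<^sup>2 * c ^ 3 * real N * real H \<le> 144 * K\<^sup>2 * c ^ 3 * (real N powr e * real N) * real H"
      using c_pos by (intro mult_right_mono mult_left_mono) auto
    then show ?thesis
      by (simp add: mult.assoc)
  qed
  finally show ?thesis .
qed

lemma window_var_le_block:
  assumes N: "1 \<le> N" "c ^ 3 \<le> real N" and H: "real H \<le> c * real N powr (1/3)"
    and m: "1 \<le> m" "m \<le> H"
    and short: "\<And>l. l < m \<Longrightarrow> window_var f r N l + window_var f r (2 * N) l \<le> S"
  shows "window_var f r N H \<le> 5 * (B * (1 + 2 * 2 powr e) * (real N powr e * real N) * ((real H)\<^sup>2 / real m)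
            + 3 * S + 144 * K\<^sup>2 * c ^ 3 * (real N powr e * real N) * real H)"
proof -
  have "H \<le> N"
    using N H c_pos by (intro le_of_le_cube_root) auto
  have drift: "cmod (mean_drift r x H m) \<le> 3 * real H * (4 * K * real H / sqrt (real N))"
    if "N < x" "x \<le> 2 * N" for x
    using that N \<open>H \<le> N\<close> m K_nonneg by (intro norm_mean_drift_le density_diff_le) auto
  have "(\<Sum>j<m. window_var f r N j + window_var f r (2 * N) j) \<le> real m * S"
    using sum_mono[of "{..<m}", OF short] by simp
  then have average: "2 / real m * (\<Sum>j<m. window_var f r N j + window_var f r (2 * N) j) \<le> 2 * S"
    using m by (simp add: field_simps)
  have "window_var f r N H \<le> 5 * (B * (1 + 2 * 2 powr e) * (real N powr e * real N) * ((real H)\<^sup>2 / real m)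
      + S + 2 * S + 144 * K\<^sup>2 * c ^ 3 * (real N powr e * real N) * real H)"
    using fejer_term_le[of N m H] drift_term_le[OF N(1) H] short[of "H mod m"] average m H N
    by (intro order_trans[OF window_var_le[OF m \<open>H \<le> N\<close> drift]] mult_left_mono add_mono) auto
  then show ?thesis
    by (simp add: algebra_simps)
qed

lemma window_var_pair_le:
  assumes IH: "\<And>N l. N0 \<le> N \<Longrightarrow> 0 < l \<Longrightarrow> real l \<le> c * real N powr (1/3) \<Longrightarrow>
      window_var f r N l \<le> A * real N powr e * real N * real l powr a"
    and "N0 \<le> N" "0 < l" "real l \<le> c * real N powr (1/3)"
  shows "window_var f r N l + window_var f r (2 * N) l \<le> A * (1 + 2 * 2 powr e) * (real N powr e * real N) * real l powr a"
proof -
  have "window_var f r (2 * N) l \<le> A * real (2 * N) powr e * real (2 * N) * real l powr a"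
    using assms c_pos le_cube_root_double by (intro IH) auto
  also have "\<dots> = A * (2 * 2 powr e) * (real N powr e * real N) * real l powr a"
    by (simp add: powr_mult)
  finally show ?thesis
    using IH[OF assms(2-4)] by (simp add: algebra_simps)
qed

lemma admissible_exponent_2: "admissible_exponent c e (window_var f r) 2"
proof -
  obtain N1 where N1: "\<And>N. N1 \<le> N \<Longrightarrow> 1 \<le> N \<and> c ^ 3 \<le> real N"
    using nat_threshold_ge_cube[of c] by blast
  define A where "A = 5 * (B * (1 + 2 * 2 powr e) + 144 * K\<^sup>2 * c ^ 3)"
  have "window_var f r N H \<le> A * real N powr e * real N * real H powr 2"
    if "N1 \<le> N" "0 < H" "real H \<le> c * real N powr (1/3)" for N H
  proof -
    define P where "P = real N powr e * real N"
    have "0 \<le> P"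
      by (simp add: P_def)
    have "window_var f r N H \<le> 5 * (B * (1 + 2 * 2 powr e) * P * ((real H)\<^sup>2 / real 1)
        + 3 * 0 + 144 * K\<^sup>2 * c ^ 3 * P * real H)"
      unfolding P_def using N1[OF that(1)] that
      by (intro window_var_le_block) auto
    also have "\<dots> \<le> 5 * (B * (1 + 2 * 2 powr e) * P * (real H)\<^sup>2 + 144 * K\<^sup>2 * c ^ 3 * P * (real H)\<^sup>2)"
    proof -
      have "real H \<le> (real H)\<^sup>2"
        using that by (simp add: power2_eq_square)
      then have "144 * K\<^sup>2 * c ^ 3 * P * real H \<le> 144 * K\<^sup>2 * c ^ 3 * P * (real H)\<^sup>2"
        using \<open>0 \<le> P\<close> c_pos by (intro mult_left_mono) auto
      then show ?thesis
        by simp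
    qed
    also have "\<dots> = A * P * real H powr 2"
      using that by (simp add: A_def powr_realpow algebra_simps)
    finally show ?thesis
      by (simp add: P_def mult.assoc)
  qed
  moreover have "0 < A"
    unfolding A_def using B_pos c_pos by (intro mult_pos_pos add_pos_nonneg) auto
  ultimately show ?thesis
    unfolding admissible_exponent_def by blast
qed

lemma short_window_var_le:
  assumes IH: "\<And>N l. N0 \<le> N \<Longrightarrow> 0 < l \<Longrightarrow> real l \<le> c * real N powr (1/3) \<Longrightarrow>
      window_var f r N l \<le> A * real N powr e * real N * real l powr a"
    and "0 \<le> A" "0 \<le> a" "a * b \<le> g" "N0 \<le> N" "0 < H" "real H \<le> c * real N powr (1/3)"
    and "m \<le> H" "real m \<le> real H powr b" "l < m"
  shows "window_var f r N l + window_var f r (2 * N) l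
    \<le> A * (1 + 2 * 2 powr e) * (real N powr e * real N) * real H powr g"
proof (cases "l = 0")
  case False
  then have "window_var f r N l + window_var f r (2 * N) l
      \<le> A * (1 + 2 * 2 powr e) * (real N powr e * real N) * real l powr a"
    using assms by (intro window_var_pair_le[OF IH]) auto
  also have "\<dots> \<le> A * (1 + 2 * 2 powr e) * (real N powr e * real N) * real H powr g"
    using assms by (intro mult_left_mono powr_le_powr_of_le_powr) auto
  finally show ?thesis .
qed (use assms(2) in simp)

lemma admissible_exponent_step:
  assumes "admissible_exponent c e (window_var f r) a" "0 \<le> a" "0 \<le> b" "b \<le> 1"
    and g: "2 - b \<le> g" "a * b \<le> g" "1 \<le> g"
  shows "admissible_exponent c e (window_var f r) g"
proof -
  obtain A N0 where "0 < A" and IH: "\<And>N l. N0 \<le> N \<Longrightarrow> 0 < l \<Longrightarrow> real l \<le> c * real N powr (1/3) \<Longrightarrow>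
      window_var f r N l \<le> A * real N powr e * real N * real l powr a"
    using assms(1) unfolding admissible_exponent_def by blast
  obtain N1 where N1: "\<And>N. N1 \<le> N \<Longrightarrow> 1 \<le> N \<and> c ^ 3 \<le> real N"
    using nat_threshold_ge_cube[of c] by blast
  define B' where "B' = B * (1 + 2 * 2 powr e)"
  define A' where "A' = A * (1 + 2 * 2 powr e)"
  define C where "C = 5 * (2 * B' + 3 * A' + 144 * K\<^sup>2 * c ^ 3)"
  have "0 < 1 + 2 * 2 powr e"
    by (simp add: add_pos_nonneg)
  then have "0 < B'" "0 < A'"
    using B_pos \<open>0 < A\<close> by (simp_all add: B'_def A'_def)
  have "window_var f r N H \<le> C * real N powr e * real N * real H powr g"
    if N: "max N0 N1 \<le> N" and H: "0 < H" "real H \<le> c * real N powr (1/3)" for N H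
  proof -
    define P where "P = real N powr e * real N"
    have "0 \<le> P" "1 \<le> real H"
      using H by (simp_all add: P_def)
    obtain m where m: "1 \<le> m" "m \<le> H" "real m \<le> real H powr b" "real H powr b \<le> 2 * real m"
      using block_length_exists[OF H(1) \<open>0 \<le> b\<close> \<open>b \<le> 1\<close>] by blast
    have "window_var f r N H \<le> 5 * (B' * P * ((real H)\<^sup>2 / real m) + 3 * (A' * P * real H powr g)
        + 144 * K\<^sup>2 * c ^ 3 * P * real H)"
      unfolding B'_def A'_def P_def using N1 N H m \<open>0 < A\<close> assms(2) g
      by (intro window_var_le_block short_window_var_le[OF IH]) auto
    also have "\<dots> \<le> 5 * (B' * P * (2 * real H powr g) + 3 * (A' * P * real H powr g)
        + 144 * K\<^sup>2 * c ^ 3 * P * real H powr g)"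
      using square_div_le_powr[of "real H" "real m" b g] powr_mono[OF g(3) \<open>1 \<le> real H\<close>]
        m g \<open>1 \<le> real H\<close> \<open>0 < B'\<close> \<open>0 \<le> P\<close> c_pos
      by (intro mult_left_mono add_mono order.refl) auto
    also have "\<dots> = C * P * real H powr g"
      by (simp add: C_def algebra_simps)
    finally show ?thesis
      by (simp add: P_def mult.assoc)
  qed
  moreover have "0 < C"
    unfolding C_def using \<open>0 < B'\<close> \<open>0 < A'\<close> c_pos by (intro mult_pos_pos add_pos_nonneg) auto
  ultimately show ?thesis
    unfolding admissible_exponent_def by blast
qed

lemma admissible_exponent_6_5: "admissible_exponent c e (window_var f r) (6/5)"
proof -
  have "admissible_exponent c e (window_var f r) (4/3)"
    using admissible_exponent_2 by (rule admissible_exponent_step[where b = "2/3"]) auto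
  then show ?thesis
    by (rule admissible_exponent_step[where b = "4/5"]) auto
qed

end

theorem mainTheorem1:
  fixes c :: real
  assumes "c > 0"
  assumes CL: "\<forall>\<epsilon>>0. \<exists>C>0. \<forall>N H :: nat. 0 < N \<longrightarrow> 0 < H \<longrightarrow>
      real H \<le> c * real N powr (1/3) \<longrightarrow>
      J3tilde N H \<le> C * real N powr \<epsilon> * real N * real H"
  shows "\<forall>\<epsilon>>0. \<exists>C'>0. \<forall>N H :: nat. 0 < N \<longrightarrow> 0 < H \<longrightarrow>
      real H \<le> c * real N powr (1/3) \<longrightarrow>
      J3 N H \<le> C' * real N powr \<epsilon> * real N * real H powr (6/5)"
proof (intro allI impI)
  fix \<epsilon> :: real
  assume "\<epsilon> > 0"
  then obtain B where "B > 0" and fejer_bound: "\<forall>N H :: nat. 0 < N \<longrightarrow> 0 < H \<longrightarrow>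
      real H \<le> c * real N powr (1/3) \<longrightarrow> J3tilde N H \<le> B * real N powr \<epsilon> * real N * real H"
    using CL by blast
  obtain K where "0 \<le> K" and regular: "\<And>x y. 1 \<le> x \<Longrightarrow> x \<le> y \<Longrightarrow>
      cmod (d3_density y - d3_density x) \<le> K * sqrt y * ((y - x) / x)"
    using d3_density_diff_le by blast
  define f where "f n = (of_nat (d3 n) :: complex)" for n
  define r where "r x = d3_density (real x)" for x
  have J3_eq: "J3 = window_var f r"
    by (simp add: fun_eq_iff J3_def M3_def window_var_def window_err_def window_sum_def
        d3_density_def f_def r_def)
  have J3tilde_eq: "J3tilde = fejer_var f r"
    by (simp add: fun_eq_iff J3tilde_def M3_def fejer_var_def fejer_err_def fejer_sum_def
        d3_density_def f_def r_def)
  interpret variance_bootstrap f r c \<epsilon> B K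
    using \<open>c > 0\<close> \<open>\<epsilon> > 0\<close> \<open>B > 0\<close> \<open>0 \<le> K\<close> fejer_bound regular
    by unfold_locales (auto simp: J3tilde_eq r_def)
  show "\<exists>C'>0. \<forall>N H :: nat. 0 < N \<longrightarrow> 0 < H \<longrightarrow> real H \<le> c * real N powr (1/3) \<longrightarrow>
      J3 N H \<le> C' * real N powr \<epsilon> * real N * real H powr (6/5)"
    unfolding J3_eq using admissible_exponent_6_5 \<open>c > 0\<close> \<open>\<epsilon> > 0\<close> window_var_nonneg
    by (intro uniform_bound_of_admissible_exponent) auto
qed

end
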